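(* Let $\mathcal{G}$ be an additive arithmetical semigroup satisfying Axiom $A^{\#}$ (constants $c_{\mathcal{G}}>0$, $q>1$) with $Z_{\mathcal{G}}(-q^{-1})\ne0$. For integers $n,m\ge0$ define $$C(n,m)=\sum_{\substack{\partial(g)=n\\ d_-(g)>m}}\mu(g),\qquad M(n,m)=\sum_{\substack{\partial(g)\le n\\ d_-(g)>m}}\mu(g).$$ Then there is a constant $0\le\eta<1$ such that $C(n,m)\ll q^{\eta n}\exp(q^m)$ and $M(n,m)\ll q^{\eta n}\exp(q^m)$, uniformly for $n,m\ge1$.
   Context: An additive arithmetical semigroup is a commutative monoid $\mathcal{G}$ (written additively, identity $e_{\mathcal{G}}$) freely generated by a countable set $\mathcal{P}$ of primes, with an additive degree map $\partial\colon\mathcal{G}\to\mathbb{Z}_{\ge0}$, $\partial(e_{\mathcal{G}})=0$, $\partial(P)>0$ for primes, finitely many elements of each degree. Axiom $A^{\#}$: $\#\{g:\partial(g)=n\}=c_{\mathcal{G}}q^n+O(q^{\eta_0 n})$ for some $0\le\eta_0<1$. $Z_{\mathcal{G}}(z)=\prod_{P}(1-z^{\partial(P)})^{-1}$ (meromorphically continued). $P\mid g$ means $g=P+r$ for some $r$. $d_-(g)=\min\{\partial(P):P\mid g\}$ for $g\ne e_{\mathcal{G}}$, and $e_{\mathcal{G}}$ is regarded as satisfying $d_-(e_{\mathcal{G}})>m$ for every $m$. $\mu$ is the Möbius function on $\mathcal{G}$. *)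

theory Defs
  imports "HOL-Analysis.Analysis" "HOL-Library.Multiset"
begin

text \<open>An additive arithmetical semigroup is modelled as the free commutative monoid
  on a type 'p of primes, i.e. finite multisets over 'p (identity = empty multiset,
  addition = multiset sum).\<close>

definition adeg :: "('p \<Rightarrow> nat) \<Rightarrow> 'p multiset \<Rightarrow> nat" where
  "adeg deg g = sum_mset (image_mset deg g)"

definition Gcount :: "('p \<Rightarrow> nat) \<Rightarrow> nat \<Rightarrow> nat" where
  "Gcount deg n = card {g. adeg deg g = n}"

definition amu :: "'p multiset \<Rightarrow> int" where
  "amu g = (if \<forall>p. count g p \<le> 1 then (-1) ^ size g else 0)"

text \<open>d_-(g) > m, with the convention that the identity satisfies it for every m.\<close>
definition dminus_gt :: "('p \<Rightarrow> nat) \<Rightarrow> 'p multiset \<Rightarrow> nat \<Rightarrow> bool" where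
  "dminus_gt deg g m \<longleftrightarrow> (\<forall>p \<in># g. m < deg p)"

definition Csum :: "('p \<Rightarrow> nat) \<Rightarrow> nat \<Rightarrow> nat \<Rightarrow> int" where
  "Csum deg n m = (\<Sum>g \<in> {g. adeg deg g = n \<and> dminus_gt deg g m}. amu g)"

definition Msum :: "('p \<Rightarrow> nat) \<Rightarrow> nat \<Rightarrow> nat \<Rightarrow> int" where
  "Msum deg n m = (\<Sum>g \<in> {g. adeg deg g \<le> n \<and> dminus_gt deg g m}. amu g)"

definition arith_semigroup :: "('p \<Rightarrow> nat) \<Rightarrow> bool" where
  "arith_semigroup deg \<longleftrightarrow> (\<forall>p. 0 < deg p) \<and> (\<forall>n. finite {g. adeg deg g = n})"

definition axiom_A_sharp :: "('p \<Rightarrow> nat) \<Rightarrow> real \<Rightarrow> real \<Rightarrow> bool" where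
  "axiom_A_sharp deg c q \<longleftrightarrow>
     (\<exists>\<eta>0 K. 0 \<le> \<eta>0 \<and> \<eta>0 < 1 \<and>
        (\<forall>n. \<bar>real (Gcount deg n) - c * q ^ n\<bar> \<le> K * q powr (\<eta>0 * real n)))"

text \<open>f (on the domain ball 0 r minus the point 1/q, with r > 1/q) is a meromorphic
  continuation of Z_G(z) = \<Sum>_g z^(deg g) = \<Sum>_n G(n) z^n.  Since the domain is
  connected, such a continuation is unique, so its value at -1/q is Z_G(-1/q).\<close>
definition Z_continuation :: "('p \<Rightarrow> nat) \<Rightarrow> real \<Rightarrow> (complex \<Rightarrow> complex) \<Rightarrow> real \<Rightarrow> bool" where
  "Z_continuation deg q f r \<longleftrightarrow>
     1 / q < r \<and> f holomorphic_on (ball 0 r - {complex_of_real (1 / q)}) \<and>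
     (\<forall>z. norm z < 1 / q \<longrightarrow> (\<lambda>n. of_nat (Gcount deg n) * z ^ n) sums f z)"

end

theory Submission
  imports Defs "HOL-Complex_Analysis.Conformal_Mappings"
begin

text \<open>
  The Moebius sums C(n, 0) are the coefficients of 1 / Z(z). By Axiom A#, H(z) = (1 - q z) Z(z)
  is holomorphic on a disc of radius q powr -\<eta>0 > 1/q, with H(1/q) = c > 0. Inside |z| < 1/q,
  H has no zeros since Z has an inverse there. Since log Z(z) has nonnegative coefficients,
  Mertens' 3-4-1 inequality excludes zeros on |z| = 1/q other than -1/q, and H(-1/q) = 2 Z(-1/q)
  is nonzero by hypothesis. Hence 1 / Z = (1 - q z) / H converges on a disc of radius 1/x with
  x < q, i.e. C(n, 0) = O(x^n).
  Sieving out the primes of degree \<le> m, C(n, m) is the convolution of C(\<cdot>, 0) with the number of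
  elements of degree n - k built from these primes. Weighted by x^-k, those numbers are bounded by
  the Euler product over the primes of degree \<le> m, which is exp (O((q / x)^m)) \<le> exp (q^m + O(1)).
\<close>

section \<open>Degrees and the Moebius function\<close>

lemma adeg_empty [simp]: "adeg deg {#} = 0"
  by (simp add: adeg_def)

lemma adeg_add_mset [simp]: "adeg deg (add_mset p g) = deg p + adeg deg g"
  by (simp add: adeg_def)

lemma adeg_union [simp]: "adeg deg (a + b) = adeg deg a + adeg deg b"
  by (simp add: adeg_def)

lemma adeg_replicate_mset [simp]: "adeg deg (replicate_mset j p) = j * deg p"
  by (induction j) auto

lemma adeg_mono: "a \<subseteq># b \<Longrightarrow> adeg deg a \<le> adeg deg b"
  by (metis adeg_union le_add1 subset_mset.le_iff_add)

lemma adeg_diff: "a \<subseteq># b \<Longrightarrow> adeg deg (b - a) = adeg deg b - adeg deg a"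
  by (metis adeg_union add_diff_cancel_left' subset_mset.add_diff_inverse)

lemma count_mult_deg_le_adeg: "count g p * deg p \<le> adeg deg g"
proof -
  have "replicate_mset (count g p) p \<subseteq># g"
    by (simp add: subseteq_mset_def)
  from adeg_mono[OF this, of deg] show ?thesis by simp
qed

lemma adeg_eq_count_mult_deg_plus_filter:
  "adeg deg g = count g p * deg p + adeg deg (filter_mset (\<lambda>x. x \<noteq> p) g)"
  by (metis adeg_replicate_mset adeg_union filter_eq_replicate_mset multiset_partition)

lemma inj_count_filter_mset: "inj (\<lambda>g. (count g p, filter_mset (\<lambda>x. x \<noteq> p) g))"
  by (rule injI) (metis filter_eq_replicate_mset multiset_partition prod.inject)

lemma adeg_eq_sum_prime_powers:
  fixes deg :: "'p \<Rightarrow> nat"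
  shows "adeg deg g = (\<Sum>(p, j) \<in> {(p, j). 1 \<le> j \<and> j \<le> count g p}. deg p)"
proof (induction g)
  case empty
  have "{(p, j). 1 \<le> j \<and> j \<le> count {#} p} = ({} :: ('p \<times> nat) set)"
    by auto
  then show ?case
    by (simp only: adeg_empty sum.empty)
next
  case (add a g)
  let ?D = "\<lambda>g. {(p, j). 1 \<le> j \<and> j \<le> count g p}"
  have "?D g \<subseteq> Sigma (set_mset g) (\<lambda>p. {1..count g p})"
    by (auto intro: count_inI)
  then have "finite (?D g)"
    by (rule finite_subset) auto
  moreover have "?D (add_mset a g) = insert (a, Suc (count g a)) (?D g)"
    by (auto simp: le_Suc_eq split: if_splits)
  ultimately show ?case
    using add by simp
qed

lemma amu_add_mset: "p \<notin># h \<Longrightarrow> amu (add_mset p h) = - amu h"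
  unfolding amu_def by (auto simp: not_in_iff) (metis le_Suc_eq not_less_eq_eq)

lemma amu_eq_0: "1 < count h p \<Longrightarrow> amu h = 0"
  unfolding amu_def by (metis not_le)

lemma abs_amu_le_1: "\<bar>amu g\<bar> \<le> 1"
  by (simp add: amu_def)

definition toggle_mset :: "'a \<Rightarrow> 'a multiset \<Rightarrow> 'a multiset" where
  "toggle_mset p h = (if p \<in># h then h - {#p#} else add_mset p h)"

lemma toggle_mset_neq: "toggle_mset p h \<noteq> h"
  by (metis insert_DiffM multi_self_add_other_not_self toggle_mset_def)

lemma toggle_mset_toggle_mset: "count h p \<le> 1 \<Longrightarrow> toggle_mset p (toggle_mset p h) = h"
  by (auto simp: toggle_mset_def in_diff_count)

lemma count_toggle_mset_le: "count h p \<le> 1 \<Longrightarrow> count (toggle_mset p h) p \<le> 1"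
  by (auto simp: toggle_mset_def not_in_iff)

lemma amu_toggle_mset:
  assumes "count h p \<le> 1"
  shows "amu (toggle_mset p h) = - amu h"
proof (cases "p \<in># h")
  case True
  then have "p \<notin># h - {#p#}"
    using assms by (simp add: not_in_iff)
  then show ?thesis
    using amu_add_mset[of p "h - {#p#}"] True by (simp add: toggle_mset_def)
next
  case False
  then show ?thesis
    by (simp add: toggle_mset_def amu_add_mset)
qed

lemma toggle_mset_smooth_cofactor:
  assumes h: "h \<subseteq># g" "set_mset (g - h) \<subseteq> Q" and p: "p \<in># g" "p \<in> Q"
  shows "toggle_mset p h \<subseteq># g \<and> set_mset (g - toggle_mset p h) \<subseteq> Q"
proof (cases "p \<in># h")
  case True
  have "h - {#p#} \<subseteq># g"
    using h(1) by (meson diff_subset_eq_self subset_mset.order_trans)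
  moreover have "set_mset (g - (h - {#p#})) \<subseteq> Q"
    using h(2) p(2) by (auto simp: in_diff_count split: if_splits)
  ultimately show ?thesis
    using True by (simp add: toggle_mset_def)
next
  case False
  have "add_mset p h \<subseteq># g"
    unfolding subseteq_mset_def
  proof
    fix a
    show "count (add_mset p h) a \<le> count g a"
      using False h(1) p(1) by (cases "a = p") (auto simp: subseteq_mset_def not_in_iff Suc_le_eq)
  qed
  moreover have "set_mset (g - add_mset p h) \<subseteq> Q"
    using h(2) by (auto simp: in_diff_count split: if_splits)
  ultimately show ?thesis
    using False by (simp add: toggle_mset_def)
qed

lemma smooth_cofactor_divisors_eq_self:
  assumes "set_mset g \<inter> Q = {}"
  shows "{h. h \<subseteq># g \<and> set_mset (g - h) \<subseteq> Q} = {g}"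
proof -
  have "h = g" if "h \<subseteq># g" "set_mset (g - h) \<subseteq> Q" for h
  proof -
    have "set_mset (g - h) = {}"
      using that assms in_diffD by fastforce
    then show ?thesis
      using that by (simp add: Diff_eq_empty_iff_mset subset_mset.antisym)
  qed
  then show ?thesis
    by auto
qed

definition Gcount_in :: "('p \<Rightarrow> nat) \<Rightarrow> 'p set \<Rightarrow> nat \<Rightarrow> nat" where
  "Gcount_in deg Q n = card {g. adeg deg g = n \<and> set_mset g \<subseteq> Q}"

lemma Gcount_in_UNIV: "Gcount_in deg UNIV = Gcount deg"
  by (simp add: fun_eq_iff Gcount_in_def Gcount_def)

lemma card_multiples_smooth_cofactor:
  assumes "adeg deg h \<le> n"
  shows "card {g. adeg deg g = n \<and> h \<subseteq># g \<and> set_mset (g - h) \<subseteq> Q} = Gcount_in deg Q (n - adeg deg h)"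
  unfolding Gcount_in_def
proof (rule bij_betw_same_card[of "\<lambda>g. g - h"], rule bij_betw_byWitness[where f' = "\<lambda>g'. h + g'"])
  show "(\<lambda>g'. h + g') ` {g. adeg deg g = n - adeg deg h \<and> set_mset g \<subseteq> Q}
      \<subseteq> {g. adeg deg g = n \<and> h \<subseteq># g \<and> set_mset (g - h) \<subseteq> Q}"
    using assms by auto
qed (auto simp: adeg_diff)

text \<open>The analogue of von Mangoldt's function: z Z'(z) / Z(z) = \<Sum>k. mangoldt deg k z^k.\<close>

definition mangoldt :: "('p \<Rightarrow> nat) \<Rightarrow> nat \<Rightarrow> nat" where
  "mangoldt deg k = (\<Sum>(p, j) \<in> {(p, j). 1 \<le> j \<and> j * deg p = k}. deg p)"

lemma card_adeg_eq_count_ge: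
  assumes "j * deg p \<le> n"
  shows "card {g. adeg deg g = n \<and> j \<le> count g p} = Gcount deg (n - j * deg p)"
  unfolding Gcount_def
proof (rule bij_betw_same_card[of "\<lambda>g. g - replicate_mset j p"],
       rule bij_betw_byWitness[where f' = "\<lambda>h. h + replicate_mset j p"])
  have "replicate_mset j p \<subseteq># g" if "j \<le> count g p" for g
    using that by (simp add: subseteq_mset_def)
  then show "\<forall>g\<in>{g. adeg deg g = n \<and> j \<le> count g p}. g - replicate_mset j p + replicate_mset j p = g"
    and "(\<lambda>g. g - replicate_mset j p) ` {g. adeg deg g = n \<and> j \<le> count g p} \<subseteq> {h. adeg deg h = n - j * deg p}"
    by (auto simp: adeg_diff)
qed (use assms in auto)

lemma ereal_less_of_less_le: "a < b \<Longrightarrow> ereal b \<le> R \<Longrightarrow> ereal a < R"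
  by (rule less_le_trans[of _ "ereal b"]) simp_all

lemma geometric_partial_sum_le:
  fixes r :: real
  assumes "0 \<le> r" "r < 1"
  shows "(\<Sum>e\<le>N. r ^ e) \<le> 1 / (1 - r)"
proof -
  have "(\<Sum>e\<le>N. r ^ e) \<le> (\<Sum>e. r ^ e)"
    by (rule sum_le_suminf) (use assms in \<open>auto intro: summable_geometric\<close>)
  also have "\<dots> = 1 / (1 - r)"
    using assms by (simp add: suminf_geometric)
  finally show ?thesis .
qed

lemma geometric_sum_atMost_le:
  fixes r :: real
  assumes "1 < r"
  shows "(\<Sum>k\<le>m. r ^ k) \<le> r / (r - 1) * r ^ m"
proof -
  have "(\<Sum>k\<le>m. r ^ k) = (\<Sum>k<Suc m. r ^ k)"
    by (simp add: lessThan_Suc_atMost)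
  also have "\<dots> = (r ^ Suc m - 1) / (r - 1)"
    by (rule geometric_sum) (use assms in simp)
  also have "\<dots> \<le> r ^ Suc m / (r - 1)"
    using assms by (intro divide_right_mono) auto
  finally show ?thesis
    by simp
qed

lemma power_decay_mult_le_power_plus_const:
  fixes a y q :: real
  assumes "0 \<le> a" "0 < y" "y < 1" "1 \<le> q"
  shows "\<exists>C. \<forall>m. a * (q * y) ^ m \<le> q ^ m + C"
proof -
  have "(\<lambda>m. a * y ^ m) \<longlonglongrightarrow> 0"
    using assms by (intro tendsto_mult_right_zero LIMSEQ_power_zero) simp
  then have "eventually (\<lambda>m. a * y ^ m < 1) sequentially"
    by (rule order_tendstoD(2)) simp
  then obtain m0 where m0: "\<And>m. m \<ge> m0 \<Longrightarrow> a * y ^ m < 1"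
    by (auto simp: eventually_sequentially)
  have "a * (q * y) ^ m \<le> q ^ m + a * q ^ m0" for m
  proof (cases "m \<ge> m0")
    case True
    have "a * (q * y) ^ m = (a * y ^ m) * q ^ m"
      by (simp add: power_mult_distrib)
    also have "\<dots> \<le> q ^ m"
      using m0[OF True] assms by (intro mult_left_le_one_le) auto
    moreover have "0 \<le> a * q ^ m0"
      using assms by simp
    ultimately show ?thesis
      by linarith
  next
    case False
    have "(q * y) ^ m \<le> q ^ m0"
      using False assms
      by (intro order_trans[OF power_mono power_increasing]) (auto simp: mult_le_cancel_left1)
    then have "a * (q * y) ^ m \<le> a * q ^ m0"
      using assms by (simp add: mult_left_mono)
    moreover have "0 \<le> q ^ m"
      using assms by simp
    ultimately show ?thesis
      by linarith
  qed
  then show ?thesis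
    by blast
qed

lemma powr_ln_ratio:
  fixes q x :: real
  assumes "1 < q" "0 < x"
  shows "q powr (ln x / ln q * real n) = x ^ n"
proof -
  have "q powr (ln x / ln q * real n) = exp (real n * ln x)"
    using assms by (simp add: powr_def)
  also have "\<dots> = x ^ n"
    using assms by (simp add: exp_of_nat_mult)
  finally show ?thesis .
qed

lemma fps_conv_radius_ge_of_nth_bound:
  fixes F :: "complex fps"
  assumes b: "0 < b" and bound: "\<And>n. norm (fps_nth F n) \<le> A * b ^ n"
  shows "ereal (1 / b) \<le> fps_conv_radius F"
  unfolding fps_conv_radius_def
proof (rule conv_radius_geI_ex')
  fix r :: real
  assume r: "0 < r" "ereal r < ereal (1 / b)"
  then have br: "0 \<le> b * r" "b * r < 1"
    using b by (auto simp: field_simps)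
  show "summable (\<lambda>n. fps_nth F n * of_real r ^ n)"
  proof (rule summable_comparison_test)
    show "\<exists>N. \<forall>n\<ge>N. norm (fps_nth F n * of_real r ^ n) \<le> A * (b * r) ^ n"
    proof (intro exI allI impI)
      fix n :: nat
      have "norm (fps_nth F n * of_real r ^ n) = norm (fps_nth F n) * r ^ n"
        using r by (simp add: norm_mult norm_power)
      also have "\<dots> \<le> A * b ^ n * r ^ n"
        using bound[of n] r by (intro mult_right_mono) auto
      finally show "norm (fps_nth F n * of_real r ^ n) \<le> A * (b * r) ^ n"
        by (simp add: power_mult_distrib mult.assoc)
    qed
    show "summable (\<lambda>n. A * (b * r) ^ n)"
      using br by (intro summable_mult summable_geometric) simp
  qed
qed

lemma fps_nth_bound_of_conv_radius:
  fixes F :: "complex fps"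
  assumes r: "0 < r" "ereal r < fps_conv_radius F"
  shows "\<exists>B. \<forall>n. norm (fps_nth F n) \<le> B / r ^ n"
proof -
  define B where "B = (\<Sum>n. norm (fps_nth F n * of_real r ^ n))"
  have "summable (\<lambda>n. norm (fps_nth F n * of_real r ^ n))"
    using r by (intro norm_summable_fps) simp
  then have "(\<Sum>n\<in>{k}. norm (fps_nth F n * of_real r ^ n)) \<le> B" for k
    unfolding B_def by (rule sum_le_suminf) auto
  then have "norm (fps_nth F k) * r ^ k \<le> B" for k
    using r by (simp add: norm_mult norm_power)
  then have "norm (fps_nth F k) \<le> B / r ^ k" for k
    using r by (simp add: pos_le_divide_eq)
  then show ?thesis
    by blast
qed

lemma fps_conv_radius_one_minus_cX [simp]:
  fixes a :: complex
  shows "fps_conv_radius (1 - fps_const a * fps_X) = \<infinity>"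
proof -
  have "fps_conv_radius (fps_const a * fps_X) \<ge> min \<infinity> \<infinity>"
    using fps_conv_radius_mult[of "fps_const a" fps_X] by simp
  then have "fps_conv_radius (1 - fps_const a * fps_X) \<ge> min \<infinity> \<infinity>"
    using fps_conv_radius_diff[of 1 "fps_const a * fps_X"] by simp
  then show ?thesis
    by simp
qed

lemma eval_fps_one_minus_cX [simp]:
  fixes a z :: complex
  shows "eval_fps (1 - fps_const a * fps_X) z = 1 - a * z"
proof -
  have "fps_conv_radius (fps_const a * fps_X) \<ge> min \<infinity> \<infinity>"
    using fps_conv_radius_mult[of "fps_const a" fps_X] by simp
  moreover have "eval_fps (fps_const a * fps_X) z = a * z"
    by (subst eval_fps_mult) auto
  ultimately show ?thesis
    by (subst eval_fps_diff) auto
qed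

lemma geometric_fps_mult:
  fixes a b :: complex
  shows "(1 - fps_const a * fps_X) * Abs_fps (\<lambda>n. b * a ^ n) = fps_const b"
proof (rule fps_ext)
  fix n
  show "fps_nth ((1 - fps_const a * fps_X) * Abs_fps (\<lambda>n. b * a ^ n)) n = fps_nth (fps_const b) n"
    by (cases n) (simp_all add: algebra_simps fps_X_mult_nth)
qed

lemma eval_fps_eq_exp_if_fps_deriv_eq:
  fixes G L :: "complex fps"
  assumes deriv: "fps_deriv G = fps_deriv L * G" and "fps_nth G 0 = 1" "fps_nth L 0 = 0"
    and z: "ereal (norm z) < fps_conv_radius G" "ereal (norm z) < fps_conv_radius L"
  shows "eval_fps G z = exp (eval_fps L z)"
proof -
  define S where "S = cball (0::complex) (norm z)"
  define Q where "Q x = eval_fps G x * exp (- eval_fps L x)" for x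
  have "\<exists>C. \<forall>x\<in>S. Q x = C"
  proof (rule has_field_derivative_zero_constant)
    fix x
    assume "x \<in> S"
    then have rG: "ereal (norm x) < fps_conv_radius G" and rL: "ereal (norm x) < fps_conv_radius L"
      using z by (auto simp: S_def intro: le_less_trans[rotated])
    then have "ereal (norm x) < fps_conv_radius (fps_deriv L)"
      using fps_conv_radius_deriv[of L] by (auto intro: less_le_trans)
    then have "eval_fps (fps_deriv G) x = eval_fps (fps_deriv L) x * eval_fps G x"
      using rG unfolding deriv by (subst eval_fps_mult) auto
    moreover have "(Q has_field_derivative
        eval_fps (fps_deriv G) x * exp (- eval_fps L x) + exp (- eval_fps L x) * (- eval_fps (fps_deriv L) x) * eval_fps G x)
        (at x within S)"
      unfolding Q_def
      by (intro DERIV_mult DERIV_chain2[OF DERIV_exp] DERIV_minus has_field_derivative_eval_fps rG rL)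
    ultimately show "(Q has_field_derivative 0) (at x within S)"
      by (simp add: algebra_simps)
  qed (simp add: S_def)
  moreover have "0 \<in> S" "z \<in> S"
    by (simp_all add: S_def)
  moreover have "Q 0 = 1"
    using assms by (simp add: Q_def eval_fps_at_0)
  ultimately have "Q z = 1"
    by metis
  then show ?thesis
    by (simp add: Q_def exp_minus field_simps)
qed

lemma Re_341_nonneg:
  assumes "norm u = 1"
  shows "0 \<le> 3 + 4 * Re u + Re (u ^ 2)"
proof -
  have "(Re u)\<^sup>2 + (Im u)\<^sup>2 = 1"
    using assms cmod_power2[of u] by simp
  then have "3 + 4 * Re u + Re (u ^ 2) = 2 * (1 + Re u)\<^sup>2"
    by (simp add: power2_eq_square algebra_simps)
  then show ?thesis
    by simp
qed

text \<open>Mertens' 3-4-1 inequality, as in the proof that \<zeta>(s) has no zeros on Re s = 1.\<close>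

lemma eval_fps_341_nonneg:
  fixes F :: "complex fps" and r :: real and w :: complex
  assumes coeff: "\<And>k. fps_nth F k = of_real (a k)" "\<And>k. 0 \<le> a k"
    and r: "0 \<le> r" "ereal r < fps_conv_radius F" and w: "norm w = 1"
  shows "0 \<le> 3 * Re (eval_fps F (of_real r)) + 4 * Re (eval_fps F (of_real r * w))
              + Re (eval_fps F (of_real r * w ^ 2))"
proof -
  define T where "T k j = fps_nth F k * (of_real r * w ^ j) ^ k" for k j
  have "T k j = of_real (a k * r ^ k) * (w ^ k) ^ j" for k j
  proof -
    have "(w ^ j) ^ k = (w ^ k) ^ j"
      by (metis power_mult mult.commute)
    then show ?thesis
      by (simp add: T_def coeff power_mult_distrib)
  qed
  then have T: "3 * Re (T k 0) + 4 * Re (T k 1) + Re (T k 2)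
      = a k * r ^ k * (3 + 4 * Re (w ^ k) + Re ((w ^ k) ^ 2))" for k
    by (simp add: distrib_left)
  have "(\<lambda>k. T k j) sums eval_fps F (of_real r * w ^ j)" for j
    unfolding T_def using r w by (intro sums_eval_fps) (simp add: norm_mult norm_power)
  then have sums: "(\<lambda>k. 3 * Re (T k 0) + 4 * Re (T k 1) + Re (T k 2))
      sums (3 * Re (eval_fps F (of_real r * w ^ 0)) + 4 * Re (eval_fps F (of_real r * w ^ 1))
              + Re (eval_fps F (of_real r * w ^ 2)))"
    by (intro sums_add sums_mult sums_Re)
  have nonneg: "0 \<le> 3 * Re (T k 0) + 4 * Re (T k 1) + Re (T k 2)" for k
    unfolding T using w coeff(2) r by (intro mult_nonneg_nonneg Re_341_nonneg) (auto simp: norm_power)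
  show ?thesis
    using sums_le[OF nonneg sums_zero sums] by simp
qed

lemma tendsto_of_real_at_left_1: "((\<lambda>t. of_real t :: 'a::real_normed_algebra_1) \<longlongrightarrow> 1) (at_left 1)"
  using tendsto_of_real[OF tendsto_ident_at[of "1::real" "{..<1}"]] by simp

lemma tendsto_radially_at_left_1:
  fixes f :: "complex \<Rightarrow> complex"
  assumes "isCont f z"
  shows "((\<lambda>t. f (of_real t * z)) \<longlongrightarrow> f z) (at_left 1)"
proof -
  have "((\<lambda>t. complex_of_real t * z) \<longlongrightarrow> z) (at_left 1)"
    using tendsto_mult_right[OF tendsto_of_real_at_left_1, of z] by simp
  with assms show ?thesis
    by (rule isCont_tendsto_compose)
qed

lemma tendsto_zero_quotient_at_left_1:
  fixes f :: "complex \<Rightarrow> complex"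
  assumes f: "(f has_field_derivative D) (at z0)" "f z0 = 0"
  shows "((\<lambda>t. f (of_real t * z0) / (of_real t - 1)) \<longlongrightarrow> D * z0) (at_left 1)"
proof -
  have "(f has_field_derivative D) (at (1 * z0))"
    using f(1) by simp
  then have "((\<lambda>s. f (s * z0)) has_field_derivative D * z0) (at 1)"
    by (rule DERIV_chain2[where g = "\<lambda>s. s * z0"]) (auto intro!: derivative_eq_intros)
  then have "((\<lambda>s. f (s * z0) / (s - 1)) \<longlongrightarrow> D * z0) (at 1)"
    using f(2) by (simp add: has_field_derivative_iff)
  moreover have "filterlim (\<lambda>t::real. complex_of_real t) (at 1) (at_left 1)"
  proof -
    note tendsto_of_real_at_left_1
    moreover have "eventually (\<lambda>t::real. t \<in> {0<..<1}) (at_left 1)"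
      by (rule eventually_at_left_real) simp
    then have "eventually (\<lambda>t::real. complex_of_real t \<noteq> 1) (at_left 1)"
      by eventually_elim auto
    ultimately show ?thesis
      by (simp add: filterlim_at)
  qed
  ultimately show ?thesis
    by (rule filterlim_compose)
qed

lemma nonzero_on_ball_of_nonzero_on_cball:
  fixes f :: "'a::{real_normed_vector, heine_borel} \<Rightarrow> 'b::real_normed_vector"
  assumes cont: "continuous_on (cball 0 R) f" and "a < R" and nz: "\<And>z. norm z \<le> a \<Longrightarrow> f z \<noteq> 0"
  shows "\<exists>\<rho>>a. \<rho> \<le> R \<and> (\<forall>z. norm z < \<rho> \<longrightarrow> f z \<noteq> 0)"
proof (cases "{z \<in> cball 0 R. f z = 0} = {}")
  case True
  then show ?thesis
    using \<open>a < R\<close> by (intro exI[of _ R]) auto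
next
  case False
  have "closed {z \<in> cball 0 R. f z = 0}"
    by (intro continuous_closed_preimage_constant cont) auto
  moreover have "bounded {z \<in> cball 0 R. f z = 0}"
    by (rule bounded_subset[OF bounded_cball[of 0 R]]) auto
  ultimately have "compact {z \<in> cball 0 R. f z = 0}"
    by (simp add: compact_eq_bounded_closed)
  then obtain z0 where z0: "z0 \<in> cball 0 R" "f z0 = 0"
    and min: "\<And>z. z \<in> cball 0 R \<Longrightarrow> f z = 0 \<Longrightarrow> norm z0 \<le> norm z"
    using continuous_attains_inf[OF _ False, of norm] by (auto intro: continuous_intros)
  have "a < norm z0"
    using nz z0(2) by (meson not_le)
  moreover have "f z \<noteq> 0" if "norm z < norm z0" for z
    using min[of z] that z0(1) by force
  ultimately show ?thesis
    using z0(1) by (intro exI[of _ "norm z0"]) auto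
qed

section \<open>Arithmetical semigroups\<close>

locale arithmetical_semigroup =
  fixes deg :: "'p \<Rightarrow> nat"
  assumes arith_semigroup: "arith_semigroup deg"
begin

lemma deg_pos: "0 < deg p"
  using arith_semigroup by (simp add: arith_semigroup_def)

lemma finite_adeg_eq: "finite {g. adeg deg g = n}"
  using arith_semigroup by (simp add: arith_semigroup_def)

lemma finite_adeg_eq_restrict: "finite {g. adeg deg g = n \<and> P g}"
  by (rule finite_subset[OF _ finite_adeg_eq[of n]]) auto

lemma finite_adeg_le: "finite {g. adeg deg g \<le> n}"
proof -
  have "{g. adeg deg g \<le> n} = (\<Union>k\<le>n. {g. adeg deg g = k})"
    by auto
  then show ?thesis
    using finite_adeg_eq by simp
qed

lemma finite_deg_le: "finite {p. deg p \<le> n}"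
proof -
  have "(\<lambda>p. {#p#}) ` {p. deg p \<le> n} \<subseteq> {g. adeg deg g \<le> n}"
    by auto
  then have "finite ((\<lambda>p. {#p#}) ` {p. deg p \<le> n})"
    using finite_adeg_le finite_subset by blast
  then show ?thesis
    by (rule finite_imageD) (auto simp: inj_on_def)
qed

lemma count_le_adeg: "count g p \<le> adeg deg g"
proof -
  have "count g p \<le> count g p * deg p"
    using deg_pos[of p] by simp
  then show ?thesis
    using count_mult_deg_le_adeg[of g p deg] by linarith
qed

lemma adeg_eq_0_iff: "adeg deg g = 0 \<longleftrightarrow> g = {#}"
  by (cases g) (use deg_pos in auto)

lemma Gcount_0: "Gcount deg 0 = 1"
proof -
  have "{g. adeg deg g = 0} = {{#}}"
    using adeg_eq_0_iff by auto
  then show ?thesis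
    by (simp add: Gcount_def)
qed

lemma sum_adeg_eq_sum_atMost:
  "(\<Sum>g | adeg deg g \<le> n \<and> P g. f g) = (\<Sum>k\<le>n. \<Sum>g | adeg deg g = k \<and> P g. f g)"
proof -
  have "{g. adeg deg g \<le> n \<and> P g} = (\<Union>k\<le>n. {g. adeg deg g = k \<and> P g})"
    by auto
  then show ?thesis
    by (simp add: sum.UNION_disjoint finite_adeg_eq_restrict disjoint_iff)
qed

lemma Csum_0: "Csum deg n 0 = (\<Sum>g | adeg deg g = n. amu g)"
  unfolding Csum_def dminus_gt_def using deg_pos by simp

lemma Msum_eq_sum_Csum: "Msum deg n m = (\<Sum>k\<le>n. Csum deg k m)"
  unfolding Msum_def Csum_def by (rule sum_adeg_eq_sum_atMost)

lemma abs_Csum_0_le_Gcount: "\<bar>Csum deg k 0\<bar> \<le> int (Gcount deg k)"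
proof -
  have "\<bar>Csum deg k 0\<bar> \<le> (\<Sum>g | adeg deg g = k. \<bar>amu g\<bar>)"
    unfolding Csum_0 by (rule sum_abs)
  also have "\<dots> \<le> (\<Sum>g | adeg deg g = k. 1)"
    by (intro sum_mono abs_amu_le_1)
  finally show ?thesis
    by (simp add: Gcount_def)
qed

text \<open>Toggling a fixed prime p \<in> Q dividing g pairs off the squarefree divisors h with opposite signs.\<close>

lemma sum_amu_smooth_cofactor:
  fixes g :: "'p multiset"
  shows "(\<Sum>h | h \<subseteq># g \<and> set_mset (g - h) \<subseteq> Q. amu h) = (if set_mset g \<inter> Q = {} then amu g else 0)"
proof (cases "set_mset g \<inter> Q = {}")
  case True
  then show ?thesis
    by (simp add: smooth_cofactor_divisors_eq_self)
next
  case False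
  then obtain p where p: "p \<in># g" "p \<in> Q"
    by blast
  define D where "D = {h. h \<subseteq># g \<and> set_mset (g - h) \<subseteq> Q}"
  define D1 where "D1 = {h \<in> D. count h p \<le> 1}"
  have "finite D"
    by (rule finite_subset[OF _ finite_adeg_le[of "adeg deg g"]]) (auto simp: D_def adeg_mono)
  then have "sum amu D = sum amu D1"
    using amu_eq_0[of _ p] by (intro sum.mono_neutral_right) (force simp: D1_def not_le)+
  also have "sum amu D1 = 0"
  proof (rule sum_involution_eq_0[where h = "toggle_mset p"])
    fix h
    assume "h \<in> D1"
    then have h: "h \<subseteq># g" "set_mset (g - h) \<subseteq> Q" "count h p \<le> 1"
      by (auto simp: D1_def D_def)
    show "amu (toggle_mset p h) + amu h = 0"
      using h(3) by (simp add: amu_toggle_mset)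
    show "toggle_mset p h \<in> D1"
      using toggle_mset_smooth_cofactor[OF h(1,2) p] count_toggle_mset_le[OF h(3)] by (simp add: D1_def D_def)
    show "toggle_mset p (toggle_mset p h) = h"
      using h(3) by (rule toggle_mset_toggle_mset)
    show "toggle_mset p h \<noteq> h"
      by (rule toggle_mset_neq)
  qed
  finally show ?thesis
    using False by (simp add: D_def)
qed

text \<open>In generating series: the Moebius series of the primes outside Q is Z_Q(z) / Z(z).\<close>

lemma sum_amu_avoiding_eq_convolution:
  "(\<Sum>g | adeg deg g = n \<and> set_mset g \<inter> Q = {}. amu g)
     = (\<Sum>k\<le>n. Csum deg k 0 * int (Gcount_in deg Q (n - k)))"
proof -
  define A where "A = {h. adeg deg h \<le> n}"
  define B where "B = {g. adeg deg g = n}"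
  define R where "R h g \<longleftrightarrow> h \<subseteq># g \<and> set_mset (g - h) \<subseteq> Q" for h g
  have "(\<Sum>k\<le>n. Csum deg k 0 * int (Gcount_in deg Q (n - k)))
      = (\<Sum>k\<le>n. \<Sum>h | adeg deg h = k. amu h * int (Gcount_in deg Q (n - adeg deg h)))"
    by (auto simp: Csum_0 sum_distrib_right intro!: sum.cong)
  also have "\<dots> = (\<Sum>h\<in>A. amu h * int (Gcount_in deg Q (n - adeg deg h)))"
    unfolding A_def
    using sum_adeg_eq_sum_atMost[where P = "\<lambda>_. True" and f = "\<lambda>h. amu h * int (Gcount_in deg Q (n - adeg deg h))"]
    by (simp only: simp_thms)
  also have "\<dots> = (\<Sum>h\<in>A. \<Sum>g\<in>{g\<in>B. R h g}. amu h)"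
    by (intro sum.cong refl)
      (simp add: A_def B_def R_def card_multiples_smooth_cofactor[symmetric] conj_assoc)
  also have "\<dots> = (\<Sum>g\<in>B. \<Sum>h\<in>{h\<in>A. R h g}. amu h)"
    by (rule sum.swap_restrict) (simp_all add: A_def B_def finite_adeg_le finite_adeg_eq)
  also have "\<dots> = (\<Sum>g\<in>B. if set_mset g \<inter> Q = {} then amu g else 0)"
  proof (intro sum.cong refl)
    fix g
    assume "g \<in> B"
    then have "{h\<in>A. R h g} = {h. h \<subseteq># g \<and> set_mset (g - h) \<subseteq> Q}"
      by (auto simp: A_def B_def R_def dest: adeg_mono[of _ _ deg])
    then show "(\<Sum>h\<in>{h\<in>A. R h g}. amu h) = (if set_mset g \<inter> Q = {} then amu g else 0)"
      by (simp add: sum_amu_smooth_cofactor)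
  qed
  also have "\<dots> = (\<Sum>g | adeg deg g = n \<and> set_mset g \<inter> Q = {}. amu g)"
    by (simp add: sum.If_cases finite_adeg_eq B_def Collect_conj_eq)
  finally show ?thesis ..
qed

lemma Csum_eq_convolution:
  "Csum deg n m = (\<Sum>k\<le>n. Csum deg k 0 * int (Gcount_in deg {p. deg p \<le> m} (n - k)))"
proof -
  have "dminus_gt deg g m \<longleftrightarrow> set_mset g \<inter> {p. deg p \<le> m} = {}" for g
    by (auto simp: dminus_gt_def)
  then have "Csum deg n m = (\<Sum>g | adeg deg g = n \<and> set_mset g \<inter> {p. deg p \<le> m} = {}. amu g)"
    by (simp add: Csum_def)
  then show ?thesis
    by (simp add: sum_amu_avoiding_eq_convolution)
qed

lemma convolution_Csum_0_Gcount:
  "(\<Sum>k\<le>n. Csum deg k 0 * int (Gcount deg (n - k))) = (if n = 0 then 1 else 0)"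
proof -
  have "{g. adeg deg g = n \<and> set_mset g \<inter> UNIV = {}} = (if n = 0 then {{#}} else {})"
    using adeg_eq_0_iff by auto
  then have "(\<Sum>g | adeg deg g = n \<and> set_mset g \<inter> UNIV = {}. amu g) = (if n = 0 then 1 else 0)"
    by (simp add: amu_def)
  then show ?thesis
    by (simp only: sum_amu_avoiding_eq_convolution Gcount_in_UNIV)
qed

lemma finite_prime_power_pairs: "finite {(p, j). 1 \<le> j \<and> j * deg p \<le> n}"
proof -
  have "deg p \<le> n \<and> j \<le> n" if "1 \<le> j" "j * deg p \<le> n" for p j
  proof -
    have "deg p \<le> j * deg p" "j \<le> j * deg p"
      using that(1) deg_pos[of p] by simp_all
    then show ?thesis
      using that(2) by linarith
  qed
  then have "{(p, j). 1 \<le> j \<and> j * deg p \<le> n} \<subseteq> {p. deg p \<le> n} \<times> {1..n}"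
    by auto
  then show ?thesis
    by (rule finite_subset) (simp add: finite_deg_le)
qed

lemma Gcount_mult_eq_convolution_mangoldt:
  "n * Gcount deg n = (\<Sum>k\<in>{1..n}. mangoldt deg k * Gcount deg (n - k))"
proof -
  define PJ where "PJ = {(p, j). 1 \<le> j \<and> j * deg p \<le> n}"
  define B where "B = {g. adeg deg g = n}"
  have fin_PJ: "finite PJ"
    unfolding PJ_def by (rule finite_prime_power_pairs)
  have "n * Gcount deg n = (\<Sum>g\<in>B. adeg deg g)"
    by (simp add: B_def Gcount_def)
  also have "\<dots> = (\<Sum>g\<in>B. \<Sum>(p, j) \<in> {x \<in> PJ. snd x \<le> count g (fst x)}. deg p)"
  proof (intro sum.cong refl)
    fix g
    assume "g \<in> B"
    then have "j * deg p \<le> n" if "j \<le> count g p" for p j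
      using that count_mult_deg_le_adeg[of g p deg] by (simp add: B_def) (meson le_trans mult_le_mono1)
    then have "{x \<in> PJ. snd x \<le> count g (fst x)} = {(p, j). 1 \<le> j \<and> j \<le> count g p}"
      by (auto simp: PJ_def)
    then show "adeg deg g = (\<Sum>(p, j) \<in> {x \<in> PJ. snd x \<le> count g (fst x)}. deg p)"
      by (simp add: adeg_eq_sum_prime_powers)
  qed
  also have "\<dots> = (\<Sum>(p, j)\<in>PJ. \<Sum>g \<in> {g\<in>B. j \<le> count g p}. deg p)"
    by (subst sum.swap_restrict) (simp_all add: fin_PJ B_def finite_adeg_eq case_prod_beta)
  also have "\<dots> = (\<Sum>(p, j)\<in>PJ. deg p * Gcount deg (n - j * deg p))"
    by (intro sum.cong refl) (auto simp: PJ_def B_def card_adeg_eq_count_ge)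
  also have "\<dots> = (\<Sum>k\<in>{1..n}. \<Sum>(p, j) \<in> {x\<in>PJ. snd x * deg (fst x) = k}. deg p * Gcount deg (n - j * deg p))"
    using deg_pos
    by (intro sum.group[symmetric] fin_PJ) (auto simp: PJ_def Suc_le_eq)
  also have "\<dots> = (\<Sum>k\<in>{1..n}. mangoldt deg k * Gcount deg (n - k))"
  proof (intro sum.cong refl)
    fix k
    assume "k \<in> {1..n}"
    then have "{x\<in>PJ. snd x * deg (fst x) = k} = {(p, j). 1 \<le> j \<and> j * deg p = k}"
      by (auto simp: PJ_def)
    then show "(\<Sum>(p, j) \<in> {x\<in>PJ. snd x * deg (fst x) = k}. deg p * Gcount deg (n - j * deg p))
        = mangoldt deg k * Gcount deg (n - k)"
      by (simp add: mangoldt_def sum_distrib_right case_prod_beta)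
  qed
  finally show ?thesis .
qed

lemma mangoldt_le: "mangoldt deg k \<le> k * Gcount deg k"
proof (cases "k = 0")
  case True
  then have empty: "{(p, j). 1 \<le> j \<and> j * deg p = k} = {}"
    using deg_pos by auto
  show ?thesis
    unfolding mangoldt_def empty by simp
next
  case False
  have "mangoldt deg k = mangoldt deg k * Gcount deg (k - k)"
    by (simp add: Gcount_0)
  also have "\<dots> \<le> (\<Sum>j\<in>{1..k}. mangoldt deg j * Gcount deg (k - j))"
    by (rule member_le_sum) (use False in auto)
  also have "\<dots> = k * Gcount deg k"
    by (rule Gcount_mult_eq_convolution_mangoldt[symmetric])
  finally show ?thesis .
qed

lemma sum_smooth_power_le_prod:
  fixes y :: real
  assumes "finite Q" "0 \<le> y" "y < 1"
  shows "(\<Sum>g | set_mset g \<subseteq> Q \<and> adeg deg g \<le> N. y ^ adeg deg g) \<le> (\<Prod>p\<in>Q. 1 / (1 - y ^ deg p))"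
  using assms(1)
proof (induction Q rule: finite_induct)
  case empty
  have "{g. set_mset g \<subseteq> {} \<and> adeg deg g \<le> N} = {{#}}"
    by auto
  then show ?case
    by simp
next
  case (insert p P)
  define T where "T Q = {g. set_mset g \<subseteq> Q \<and> adeg deg g \<le> N}" for Q
  define split where "split g = (count g p, filter_mset (\<lambda>x. x \<noteq> p) g)" for g
  have fin_T: "finite (T Q)" for Q
    by (rule finite_subset[OF _ finite_adeg_le[of N]]) (auto simp: T_def)
  have inj: "inj_on split (T (insert p P))"
    using inj_count_filter_mset[of p] unfolding split_def by (rule inj_on_subset) simp
  have img: "split ` T (insert p P) \<subseteq> {..N} \<times> T P"
  proof (rule image_subsetI)
    fix g
    assume "g \<in> T (insert p P)"
    then have "set_mset g \<subseteq> insert p P" "adeg deg g \<le> N"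
      by (simp_all add: T_def)
    then show "split g \<in> {..N} \<times> T P"
      using count_le_adeg[of g p] adeg_eq_count_mult_deg_plus_filter[of deg g p]
      by (auto simp: T_def split_def)
  qed
  have y_deg: "0 \<le> y ^ deg p" "y ^ deg p < 1"
    using assms(2,3) deg_pos[of p] by (auto simp: power_less_one_iff)
  have "(\<Sum>g\<in>T (insert p P). y ^ adeg deg g)
      = (\<Sum>(e, h)\<in>split ` T (insert p P). y ^ (e * deg p) * y ^ adeg deg h)"
    by (subst sum.reindex[OF inj])
      (simp add: split_def adeg_eq_count_mult_deg_plus_filter[symmetric] power_add[symmetric])
  also have "\<dots> \<le> (\<Sum>(e, h)\<in>{..N} \<times> T P. y ^ (e * deg p) * y ^ adeg deg h)"
    using img fin_T assms(2) by (intro sum_mono2) auto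
  also have "\<dots> = (\<Sum>e\<le>N. (y ^ deg p) ^ e) * (\<Sum>h\<in>T P. y ^ adeg deg h)"
    by (simp add: sum_product sum.cartesian_product power_mult[symmetric] mult.commute[of _ "deg p"])
  also have "\<dots> \<le> 1 / (1 - y ^ deg p) * (\<Prod>p\<in>P. 1 / (1 - y ^ deg p))"
    using insert.IH assms(2) y_deg
    by (intro mult_mono geometric_partial_sum_le sum_nonneg) (auto simp: T_def)
  finally show ?case
    using insert.hyps by (simp add: T_def)
qed

lemma sum_deg_le_power_le:
  fixes y A q :: real
  assumes G: "\<And>k. real (Gcount deg k) \<le> A * q ^ k" and y: "0 < y" "1 < q * y"
  shows "(\<Sum>p | deg p \<le> m. y ^ deg p) \<le> A * (q * y / (q * y - 1)) * (q * y) ^ m"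
proof -
  have A: "0 \<le> A"
    using G[of 0] by (simp add: Gcount_0)
  have "(\<Sum>p | deg p \<le> m. y ^ deg p) = (\<Sum>g\<in>(\<lambda>p. {#p#}) ` {p. deg p \<le> m}. y ^ adeg deg g)"
    by (subst sum.reindex) (auto simp: inj_on_def)
  also have "\<dots> \<le> (\<Sum>g | adeg deg g \<le> m. y ^ adeg deg g)"
    by (rule sum_mono2) (use finite_adeg_le y in auto)
  also have "\<dots> = (\<Sum>k\<le>m. real (Gcount deg k) * y ^ k)"
    using sum_adeg_eq_sum_atMost[where P = "\<lambda>_. True" and f = "\<lambda>g. y ^ adeg deg g"]
    by (simp add: Gcount_def)
  also have "\<dots> \<le> (\<Sum>k\<le>m. A * (q * y) ^ k)"
    using G y by (intro sum_mono) (simp add: power_mult_distrib mult_right_mono)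
  also have "\<dots> \<le> A * (q * y / (q * y - 1) * (q * y) ^ m)"
    unfolding sum_distrib_left[symmetric] using geometric_sum_atMost_le[OF y(2)] A
    by (rule mult_left_mono)
  finally show ?thesis
    by (simp add: mult.assoc)
qed

lemma sum_Gcount_in_power_le_exp:
  fixes y :: real
  assumes y: "0 \<le> y" "y < 1"
  shows "(\<Sum>j\<le>n. real (Gcount_in deg {p. deg p \<le> m} j) * y ^ j)
           \<le> exp ((\<Sum>p | deg p \<le> m. y ^ deg p) / (1 - y))"
proof -
  have "(\<Sum>j\<le>n. real (Gcount_in deg {p. deg p \<le> m} j) * y ^ j)
      = (\<Sum>g | set_mset g \<subseteq> {p. deg p \<le> m} \<and> adeg deg g \<le> n. y ^ adeg deg g)"
    using sum_adeg_eq_sum_atMost[where P = "\<lambda>g. set_mset g \<subseteq> {p. deg p \<le> m}" and f = "\<lambda>g. y ^ adeg deg g"]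
    by (simp add: Gcount_in_def conj_commute)
  also have "\<dots> \<le> (\<Prod>p | deg p \<le> m. 1 / (1 - y ^ deg p))"
    by (rule sum_smooth_power_le_prod[OF finite_deg_le y])
  also have "\<dots> \<le> (\<Prod>p | deg p \<le> m. exp (y ^ deg p / (1 - y)))"
  proof (rule prod_mono)
    fix p
    have u: "0 \<le> y ^ deg p" "y ^ deg p \<le> y"
      using y deg_pos[of p] by (auto intro: power_le_one power_decreasing[of 1, simplified])
    have "1 / (1 - y ^ deg p) = 1 + y ^ deg p / (1 - y ^ deg p)"
      using u y by (simp add: field_simps)
    also have "\<dots> \<le> exp (y ^ deg p / (1 - y ^ deg p))"
      by (rule exp_ge_add_one_self)
    also have "\<dots> \<le> exp (y ^ deg p / (1 - y))"
      using u y by (simp add: frac_le)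
    finally show "0 \<le> 1 / (1 - y ^ deg p) \<and> 1 / (1 - y ^ deg p) \<le> exp (y ^ deg p / (1 - y))"
      using u y by simp
  qed
  also have "\<dots> = exp ((\<Sum>p | deg p \<le> m. y ^ deg p) / (1 - y))"
    by (simp add: exp_sum finite_deg_le sum_divide_distrib)
  finally show ?thesis .
qed

lemma abs_Csum_le_weighted_sum_Gcount_in:
  fixes B x :: real
  assumes x: "0 < x" and B: "\<And>k. \<bar>real_of_int (Csum deg k 0)\<bar> \<le> B * x ^ k"
  shows "\<bar>real_of_int (Csum deg n m)\<bar>
           \<le> B * x ^ n * (\<Sum>j\<le>n. real (Gcount_in deg {p. deg p \<le> m} j) * (1 / x) ^ j)"
proof -
  let ?b = "\<lambda>j. real (Gcount_in deg {p. deg p \<le> m} j)"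
  have "\<bar>real_of_int (Csum deg n m)\<bar> \<le> (\<Sum>k\<le>n. \<bar>real_of_int (Csum deg k 0)\<bar> * ?b (n - k))"
    unfolding Csum_eq_convolution[of n m] by (simp add: abs_mult order_trans[OF sum_abs])
  also have "\<dots> \<le> (\<Sum>k\<le>n. B * x ^ k * ?b (n - k))"
    using B by (intro sum_mono mult_right_mono) auto
  also have "\<dots> = B * x ^ n * (\<Sum>k\<le>n. ?b (n - k) * (1 / x) ^ (n - k))"
    unfolding sum_distrib_left using x by (intro sum.cong refl) (simp add: power_diff power_divide)
  also have "\<dots> = B * x ^ n * (\<Sum>j\<le>n. ?b j * (1 / x) ^ j)"
    by (subst sum.atLeastAtMost_rev[of _ 0 n, simplified atLeast0AtMost]) simp
  finally show ?thesis .
qed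

lemma Csum_bound_of_Csum_0_bound:
  fixes A B x q :: real
  assumes G: "\<And>k. real (Gcount deg k) \<le> A * q ^ k" and x: "1 < x" "x < q"
    and B: "\<And>k. \<bar>real_of_int (Csum deg k 0)\<bar> \<le> B * x ^ k"
  shows "\<exists>K. \<forall>n m. \<bar>real_of_int (Csum deg n m)\<bar> \<le> K * x ^ n * exp (q ^ m)"
proof -
  define y where "y = 1 / x"
  have y: "0 < y" "y < 1" "1 < q * y"
    using x by (auto simp: y_def field_simps)
  define a where "a = A * (q * y / (q * y - 1)) / (1 - y)"
  have "0 \<le> A"
    using G[of 0] by (simp add: Gcount_0)
  then obtain C where C: "\<And>m. a * (q * y) ^ m \<le> q ^ m + C"
    using power_decay_mult_le_power_plus_const[of a y q] x y by (auto simp: a_def)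
  have B0: "0 \<le> B"
    using B[of 0] by (metis abs_ge_zero order_trans mult.right_neutral power_0)
  have "\<bar>real_of_int (Csum deg n m)\<bar> \<le> B * exp C * x ^ n * exp (q ^ m)" for n m
  proof -
    have "(\<Sum>p | deg p \<le> m. y ^ deg p) / (1 - y) \<le> A * (q * y / (q * y - 1)) * (q * y) ^ m / (1 - y)"
      using y by (intro divide_right_mono sum_deg_le_power_le[OF G y(1,3)]) simp
    also have "\<dots> \<le> q ^ m + C"
      using C[of m] by (simp add: a_def)
    finally have exponent: "(\<Sum>p | deg p \<le> m. y ^ deg p) / (1 - y) \<le> q ^ m + C" .
    have "\<bar>real_of_int (Csum deg n m)\<bar> \<le> B * x ^ n * (\<Sum>j\<le>n. real (Gcount_in deg {p. deg p \<le> m} j) * y ^ j)"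
      unfolding y_def using x B by (intro abs_Csum_le_weighted_sum_Gcount_in) auto
    also have "\<dots> \<le> B * x ^ n * exp ((\<Sum>p | deg p \<le> m. y ^ deg p) / (1 - y))"
      using B0 x y by (intro mult_left_mono sum_Gcount_in_power_le_exp) auto
    also have "\<dots> \<le> B * x ^ n * exp (q ^ m + C)"
      using exponent B0 x by (intro mult_left_mono) auto
    finally show ?thesis
      by (simp add: exp_add mult_ac)
  qed
  then show ?thesis
    by blast
qed

lemma Msum_bound_of_Csum_bound:
  fixes x K E :: real
  assumes x: "1 < x" and C: "\<And>n. \<bar>real_of_int (Csum deg n m)\<bar> \<le> K * x ^ n * E"
  shows "\<bar>real_of_int (Msum deg n m)\<bar> \<le> K * (x / (x - 1)) * x ^ n * E"
proof -
  have KE: "0 \<le> K * E"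
    using C[of 0] by (metis abs_ge_zero order_trans mult.right_neutral power_0)
  have "\<bar>real_of_int (Msum deg n m)\<bar> \<le> (\<Sum>k\<le>n. \<bar>real_of_int (Csum deg k m)\<bar>)"
    unfolding Msum_eq_sum_Csum by simp
  also have "\<dots> \<le> (\<Sum>k\<le>n. K * E * x ^ k)"
    using C by (intro sum_mono) (simp add: mult_ac)
  also have "\<dots> \<le> K * E * (x / (x - 1) * x ^ n)"
    unfolding sum_distrib_left[symmetric] using geometric_sum_atMost_le[OF x] KE
    by (rule mult_left_mono)
  finally show ?thesis
    by (simp add: mult_ac)
qed

lemma Csum_Msum_bound_of_Csum_0_bound:
  fixes A B x q :: real
  assumes G: "\<And>k. real (Gcount deg k) \<le> A * q ^ k" and x: "1 < x" "x < q"
    and B: "\<And>k. \<bar>real_of_int (Csum deg k 0)\<bar> \<le> B * x ^ k"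
  obtains K where "\<And>n m. \<bar>real_of_int (Csum deg n m)\<bar> \<le> K * x ^ n * exp (q ^ m)"
    and "\<And>n m. \<bar>real_of_int (Msum deg n m)\<bar> \<le> K * x ^ n * exp (q ^ m)"
proof -
  obtain K1 where C: "\<And>n m. \<bar>real_of_int (Csum deg n m)\<bar> \<le> K1 * x ^ n * exp (q ^ m)"
    using Csum_bound_of_Csum_0_bound[OF G x B] by blast
  define K2 where "K2 = K1 * (x / (x - 1))"
  have M: "\<bar>real_of_int (Msum deg n m)\<bar> \<le> K2 * x ^ n * exp (q ^ m)" for n m
    unfolding K2_def by (rule Msum_bound_of_Csum_bound[OF x(1) C])
  have "0 \<le> K1 * exp (q ^ 0)"
    using C[of 0 0] by (metis abs_ge_zero order_trans mult.right_neutral power_0)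
  then have "K1 \<le> K2"
    using x(1) by (simp add: K2_def zero_le_mult_iff field_simps)
  then have "K1 * x ^ n * exp (q ^ m) \<le> K2 * x ^ n * exp (q ^ m)" for n m
    using x(1) by (intro mult_right_mono) auto
  then have "\<bar>real_of_int (Csum deg n m)\<bar> \<le> K2 * x ^ n * exp (q ^ m)" for n m
    by (rule order_trans[OF C])
  then show ?thesis
    using M by (rule that)
qed

end

section \<open>Generating series\<close>

definition Z_fps :: "('p \<Rightarrow> nat) \<Rightarrow> complex fps" where
  "Z_fps deg = Abs_fps (\<lambda>n. of_nat (Gcount deg n))"

definition mu_fps :: "('p \<Rightarrow> nat) \<Rightarrow> complex fps" where
  "mu_fps deg = Abs_fps (\<lambda>n. of_int (Csum deg n 0))"

definition log_Z_fps :: "('p \<Rightarrow> nat) \<Rightarrow> complex fps" where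
  "log_Z_fps deg = Abs_fps (\<lambda>k. of_real (real (mangoldt deg k) / real k))"

definition H_fps :: "('p \<Rightarrow> nat) \<Rightarrow> real \<Rightarrow> complex fps" where
  "H_fps deg q = (1 - fps_const (of_real q) * fps_X) * Z_fps deg"

context arithmetical_semigroup
begin

lemma mu_fps_mult_Z_fps: "mu_fps deg * Z_fps deg = 1"
proof (rule fps_ext)
  fix n
  have "fps_nth (mu_fps deg * Z_fps deg) n = of_int (\<Sum>k\<le>n. Csum deg k 0 * int (Gcount deg (n - k)))"
    by (simp add: fps_mult_nth mu_fps_def Z_fps_def atLeast0AtMost)
  then show "fps_nth (mu_fps deg * Z_fps deg) n = fps_nth 1 n"
    by (simp add: convolution_Csum_0_Gcount)
qed

lemma fps_deriv_Z_fps: "fps_deriv (Z_fps deg) = fps_deriv (log_Z_fps deg) * Z_fps deg"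
proof (rule fps_ext)
  fix n
  have "fps_nth (fps_deriv (log_Z_fps deg) * Z_fps deg) n
      = (\<Sum>i=0..n. of_nat (mangoldt deg (Suc i)) * of_nat (Gcount deg (Suc n - Suc i)))"
    by (simp add: fps_mult_nth log_Z_fps_def Z_fps_def fps_deriv_def del: of_nat_Suc)
  also have "\<dots> = of_nat (\<Sum>k\<in>{1..Suc n}. mangoldt deg k * Gcount deg (Suc n - k))"
    by (subst sum.shift_bounds_cl_Suc_ivl[symmetric]) simp
  also have "\<dots> = of_nat (Suc n * Gcount deg (Suc n))"
    by (simp only: Gcount_mult_eq_convolution_mangoldt)
  finally show "fps_nth (fps_deriv (Z_fps deg)) n = fps_nth (fps_deriv (log_Z_fps deg) * Z_fps deg) n"
    by (simp add: Z_fps_def algebra_simps)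
qed

lemma mu_fps_eq_div_H_fps: "mu_fps deg = (1 - fps_const (of_real q) * fps_X) * inverse (H_fps deg q)"
proof -
  have "fps_nth (H_fps deg q) 0 = 1"
    by (simp add: H_fps_def Z_fps_def Gcount_0)
  then have "H_fps deg q * inverse (H_fps deg q) = 1"
    by (intro inverse_mult_eq_1') simp
  then have "mu_fps deg = mu_fps deg * (H_fps deg q * inverse (H_fps deg q))"
    by simp
  also have "\<dots> = (mu_fps deg * Z_fps deg) * ((1 - fps_const (of_real q) * fps_X) * inverse (H_fps deg q))"
    by (simp add: H_fps_def ac_simps)
  finally show ?thesis
    by (simp add: mu_fps_mult_Z_fps)
qed

end

section \<open>Zeros of (1 - q z) Z(z) under Axiom A#\<close>

locale axiom_A_sharp_semigroup = arithmetical_semigroup deg for deg :: "'p \<Rightarrow> nat" +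
  fixes c q \<eta>0 K :: real
  assumes c_pos: "0 < c" and q_gt_1: "1 < q" and \<eta>0: "0 \<le> \<eta>0" "\<eta>0 < 1"
    and Gcount_error: "\<And>n. \<bar>real (Gcount deg n) - c * q ^ n\<bar> \<le> K * q powr (\<eta>0 * real n)"
begin

definition H_radius :: real where
  "H_radius = 1 / q powr \<eta>0"

lemma one_div_q_less_H_radius: "1 / q < H_radius"
proof -
  have "q powr \<eta>0 < q powr 1"
    using q_gt_1 \<eta>0 by (intro powr_less_mono) auto
  then show ?thesis
    using q_gt_1 by (simp add: H_radius_def frac_less2)
qed

lemma Gcount_le: "real (Gcount deg k) \<le> (c + \<bar>K\<bar>) * q ^ k"
proof -
  have "q powr (\<eta>0 * real k) \<le> q powr (real k)"
    using \<eta>0 q_gt_1 by (intro powr_mono) (auto simp: mult_left_le_one_le)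
  also have "\<dots> = q ^ k"
    using q_gt_1 by (simp add: powr_realpow)
  finally have "K * q powr (\<eta>0 * real k) \<le> \<bar>K\<bar> * q ^ k"
    using q_gt_1 by (meson abs_ge_self abs_ge_zero mult_mono order_trans powr_ge_zero)
  then show ?thesis
    using Gcount_error[of k] by (simp add: algebra_simps)
qed

lemma conv_radius_Z_fps: "ereal (1 / q) \<le> fps_conv_radius (Z_fps deg)"
  by (rule fps_conv_radius_ge_of_nth_bound[of q _ "c + \<bar>K\<bar>"]) (use q_gt_1 Gcount_le in \<open>auto simp: Z_fps_def\<close>)

lemma conv_radius_mu_fps: "ereal (1 / q) \<le> fps_conv_radius (mu_fps deg)"
proof (rule fps_conv_radius_ge_of_nth_bound[of q _ "c + \<bar>K\<bar>"])
  fix n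
  have "\<bar>real_of_int (Csum deg n 0)\<bar> \<le> real (Gcount deg n)"
    using abs_Csum_0_le_Gcount[of n] by linarith
  then show "norm (fps_nth (mu_fps deg) n) \<le> (c + \<bar>K\<bar>) * q ^ n"
    using Gcount_le[of n] by (simp add: mu_fps_def)
qed (use q_gt_1 in auto)

lemma conv_radius_log_Z_fps: "ereal (1 / q) \<le> fps_conv_radius (log_Z_fps deg)"
proof (rule fps_conv_radius_ge_of_nth_bound[of q _ "c + \<bar>K\<bar>"])
  fix n
  have "real (mangoldt deg n) / real n \<le> real (Gcount deg n)"
    using mangoldt_le[of n] by (cases "n = 0") (simp_all add: field_simps, metis of_nat_le_iff of_nat_mult mult.commute)
  moreover have "norm (fps_nth (log_Z_fps deg) n) = real (mangoldt deg n) / real n"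
    unfolding log_Z_fps_def fps_nth_Abs_fps norm_of_real by simp
  ultimately show "norm (fps_nth (log_Z_fps deg) n) \<le> (c + \<bar>K\<bar>) * q ^ n"
    using Gcount_le[of n] by linarith
qed (use q_gt_1 in auto)

text \<open>E is Z(z) - c / (1 - q z): Axiom A# gives it radius of convergence q powr -\<eta>0 > 1/q.\<close>

lemma H_fps_decomposition:
  obtains E where "ereal H_radius \<le> fps_conv_radius E"
    and "H_fps deg q = fps_const (complex_of_real c) + (1 - fps_const (complex_of_real q) * fps_X) * E"
proof
  define E where "E = Abs_fps (\<lambda>n. complex_of_real (real (Gcount deg n) - c * q ^ n))"
  have "q powr \<eta>0 > 0"
    using q_gt_1 by simp
  moreover have "norm (fps_nth E n) \<le> \<bar>K\<bar> * (q powr \<eta>0) ^ n" for n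
  proof -
    have "norm (fps_nth E n) = \<bar>real (Gcount deg n) - c * q ^ n\<bar>"
      unfolding E_def fps_nth_Abs_fps norm_of_real ..
    also have "\<dots> \<le> \<bar>K\<bar> * q powr (\<eta>0 * real n)"
      using Gcount_error[of n] by (meson abs_ge_self mult_right_mono order_trans powr_ge_zero)
    also have "q powr (\<eta>0 * real n) = (q powr \<eta>0) ^ n"
      using q_gt_1 by (simp add: powr_realpow[symmetric] powr_powr)
    finally show ?thesis .
  qed
  ultimately show "ereal H_radius \<le> fps_conv_radius E"
    unfolding H_radius_def by (rule fps_conv_radius_ge_of_nth_bound)
  have Z: "Z_fps deg = Abs_fps (\<lambda>n. complex_of_real c * complex_of_real q ^ n) + E"
    by (rule fps_ext) (simp add: Z_fps_def E_def)
  show "H_fps deg q = fps_const (complex_of_real c) + (1 - fps_const (complex_of_real q) * fps_X) * E"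
    unfolding H_fps_def Z distrib_left geometric_fps_mult ..
qed

lemma conv_radius_H_fps: "ereal H_radius \<le> fps_conv_radius (H_fps deg q)"
proof -
  obtain E where E: "ereal H_radius \<le> fps_conv_radius E"
    and H: "H_fps deg q = fps_const (complex_of_real c) + (1 - fps_const (complex_of_real q) * fps_X) * E"
    by (rule H_fps_decomposition)
  have "min (fps_conv_radius (fps_const (complex_of_real c))) (fps_conv_radius ((1 - fps_const (complex_of_real q) * fps_X) * E))
      \<le> fps_conv_radius (H_fps deg q)"
    unfolding H by (rule fps_conv_radius_add)
  moreover have "min (fps_conv_radius (1 - fps_const (complex_of_real q) * fps_X)) (fps_conv_radius E)
      \<le> fps_conv_radius ((1 - fps_const (complex_of_real q) * fps_X) * E)"
    by (rule fps_conv_radius_mult)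
  ultimately show ?thesis
    using E by simp
qed

lemma eval_H_fps_one_div_q: "eval_fps (H_fps deg q) (of_real (1 / q)) = complex_of_real c"
proof -
  obtain E where E: "ereal H_radius \<le> fps_conv_radius E"
    and H: "H_fps deg q = fps_const (complex_of_real c) + (1 - fps_const (complex_of_real q) * fps_X) * E"
    by (rule H_fps_decomposition)
  have r: "ereal (norm (complex_of_real (1 / q))) < fps_conv_radius E"
    using one_div_q_less_H_radius q_gt_1 by (intro ereal_less_of_less_le[OF _ E]) (simp add: norm_divide)
  then have "ereal (norm (complex_of_real (1 / q))) < fps_conv_radius ((1 - fps_const (complex_of_real q) * fps_X) * E)"
    using fps_conv_radius_mult[of "1 - fps_const (complex_of_real q) * fps_X" E] by simp
  then show ?thesis
    using r q_gt_1 unfolding H by (simp add: eval_fps_add eval_fps_mult)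
qed

lemma eval_H_fps:
  assumes "norm z < 1 / q"
  shows "eval_fps (H_fps deg q) z = (1 - of_real q * z) * eval_fps (Z_fps deg) z"
  unfolding H_fps_def using ereal_less_of_less_le[OF assms conv_radius_Z_fps]
  by (subst eval_fps_mult) auto

lemma eval_Z_fps_eq_exp:
  assumes "norm z < 1 / q"
  shows "eval_fps (Z_fps deg) z = exp (eval_fps (log_Z_fps deg) z)"
  using ereal_less_of_less_le[OF assms conv_radius_Z_fps] ereal_less_of_less_le[OF assms conv_radius_log_Z_fps]
  by (intro eval_fps_eq_exp_if_fps_deriv_eq fps_deriv_Z_fps) (simp_all add: Z_fps_def log_Z_fps_def Gcount_0)

lemma norm_Z_fps_341:
  assumes r: "0 \<le> r" "r < 1 / q" and w: "norm w = 1"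
  shows "1 \<le> norm (eval_fps (Z_fps deg) (of_real r)) ^ 3 * norm (eval_fps (Z_fps deg) (of_real r * w)) ^ 4
              * norm (eval_fps (Z_fps deg) (of_real r * w ^ 2))"
proof -
  let ?L = "eval_fps (log_Z_fps deg)"
  have "norm (of_real r * w ^ j) < 1 / q" for j
    using r w by (simp add: norm_mult norm_power)
  then have "norm (eval_fps (Z_fps deg) (of_real r * w ^ j)) = exp (Re (?L (of_real r * w ^ j)))" for j
    by (simp add: eval_Z_fps_eq_exp)
  then have "norm (eval_fps (Z_fps deg) (of_real r)) ^ 3 * norm (eval_fps (Z_fps deg) (of_real r * w)) ^ 4
              * norm (eval_fps (Z_fps deg) (of_real r * w ^ 2))
      = exp (3 * Re (?L (of_real r)) + 4 * Re (?L (of_real r * w)) + Re (?L (of_real r * w ^ 2)))"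
    by (metis (no_types) exp_add exp_of_nat_mult power_0 power_one_right mult_1_right of_nat_numeral)
  moreover have "0 \<le> 3 * Re (?L (of_real r)) + 4 * Re (?L (of_real r * w)) + Re (?L (of_real r * w ^ 2))"
    using r w ereal_less_of_less_le[OF r(2) conv_radius_log_Z_fps]
    by (intro eval_fps_341_nonneg[where a = "\<lambda>k. real (mangoldt deg k) / real k"]) (simp_all add: log_Z_fps_def)
  ultimately show ?thesis
    by simp
qed

lemma norm_H_fps_341:
  assumes t: "0 < t" "t < 1" and w: "norm w = 1"
  shows "(1 - t) ^ 3 * norm (1 - of_real t * w) ^ 4 * norm (1 - of_real t * w ^ 2)
      \<le> norm (eval_fps (H_fps deg q) (of_real (t / q))) ^ 3 * norm (eval_fps (H_fps deg q) (of_real (t / q) * w)) ^ 4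
         * norm (eval_fps (H_fps deg q) (of_real (t / q) * w ^ 2))"
proof -
  let ?H = "\<lambda>u. norm (eval_fps (H_fps deg q) u)" and ?Z = "\<lambda>u. norm (eval_fps (Z_fps deg) u)"
  have H: "?H (of_real (t / q) * v) = norm (1 - of_real t * v) * ?Z (of_real (t / q) * v)" if "norm v \<le> 1" for v
  proof -
    have "norm (of_real (t / q) * v) = t / q * norm v"
      using t q_gt_1 by (simp add: norm_mult norm_divide)
    also have "\<dots> \<le> t / q"
      using t q_gt_1 that by (intro mult_left_le) auto
    also have "\<dots> < 1 / q"
      using t q_gt_1 by (simp add: divide_strict_right_mono)
    finally have "norm (of_real (t / q) * v) < 1 / q" .
    moreover have "1 - of_real q * (of_real (t / q) * v) = 1 - of_real t * v"
      using q_gt_1 by simp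
    ultimately show ?thesis
      by (simp add: eval_H_fps norm_mult)
  qed
  have "norm (1 - complex_of_real t) = 1 - t"
    using t by (metis abs_of_pos diff_gt_0_iff_gt norm_of_real of_real_1 of_real_diff)
  then have H0: "?H (of_real (t / q)) = (1 - t) * ?Z (of_real (t / q))"
    using H[of 1] by simp
  have H1: "?H (of_real (t / q) * w) = norm (1 - of_real t * w) * ?Z (of_real (t / q) * w)"
    using H[of w] w by simp
  have H2: "?H (of_real (t / q) * w ^ 2) = norm (1 - of_real t * w ^ 2) * ?Z (of_real (t / q) * w ^ 2)"
    using H[of "w ^ 2"] w by (simp add: norm_power)
  have "(1 - t) ^ 3 * norm (1 - of_real t * w) ^ 4 * norm (1 - of_real t * w ^ 2) * 1
      \<le> (1 - t) ^ 3 * norm (1 - of_real t * w) ^ 4 * norm (1 - of_real t * w ^ 2)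
         * (?Z (of_real (t / q)) ^ 3 * ?Z (of_real (t / q) * w) ^ 4 * ?Z (of_real (t / q) * w ^ 2))"
    using norm_Z_fps_341[of "t / q" w] t w q_gt_1
    by (intro mult_left_mono) (simp_all add: divide_strict_right_mono)
  then show ?thesis
    unfolding H0 H1 H2 by (simp add: power_mult_distrib mult_ac)
qed

lemma norm_H_fps_341_div:
  assumes t: "0 < t" "t < 1" and w: "norm w = 1"
  shows "norm (1 - of_real t * w) ^ 4 * norm (1 - of_real t * w ^ 2)
      \<le> (1 - t) * norm (eval_fps (H_fps deg q) (of_real (t / q))) ^ 3
         * norm (eval_fps (H_fps deg q) (of_real (t / q) * w) / (of_real t - 1)) ^ 4
         * norm (eval_fps (H_fps deg q) (of_real (t / q) * w ^ 2))"
proof -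
  let ?H = "\<lambda>u. norm (eval_fps (H_fps deg q) u)"
  have "complex_of_real t - 1 = complex_of_real (t - 1)"
    by simp
  moreover have "norm (complex_of_real (t - 1)) = 1 - t"
    using t by (simp only: norm_of_real)
  ultimately have "?H (of_real (t / q) * w) = (1 - t) * norm (eval_fps (H_fps deg q) (of_real (t / q) * w) / (of_real t - 1))"
    using t by (simp add: norm_divide)
  then have "(1 - t) ^ 3 * (norm (1 - of_real t * w) ^ 4 * norm (1 - of_real t * w ^ 2))
      \<le> (1 - t) ^ 3 * ((1 - t) * ?H (of_real (t / q)) ^ 3
         * norm (eval_fps (H_fps deg q) (of_real (t / q) * w) / (of_real t - 1)) ^ 4 * ?H (of_real (t / q) * w ^ 2))"
    using norm_H_fps_341[OF t w] by (simp add: power_mult_distrib mult_ac eval_nat_numeral)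
  then show ?thesis
    using t by (simp add: mult_le_cancel_left_pos)
qed

text \<open>A zero of H at w/q would make |Z(t/q)|^3 |Z(t w/q)|^4 |Z(t w^2/q)| = O(1 - t) as t \<rightarrow> 1-,
  contradicting the lower bound 1 of the 3-4-1 inequality.\<close>

lemma H_fps_nonzero_on_circle:
  assumes w: "norm w = 1" "w ^ 2 \<noteq> 1"
  shows "eval_fps (H_fps deg q) (w / of_real q) \<noteq> 0"
proof
  assume zero: "eval_fps (H_fps deg q) (w / of_real q) = 0"
  define H where "H = eval_fps (H_fps deg q)"
  define z where "z j = w ^ j / of_real q" for j :: nat
  define Q where "Q t = H (of_real t * z 1) / (of_real t - 1)" for t :: real
  have conv: "ereal (norm u) < fps_conv_radius (H_fps deg q)" if "norm u \<le> 1 / q" for u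
    using that one_div_q_less_H_radius by (intro ereal_less_of_less_le[OF _ conv_radius_H_fps]) simp
  have norm_z: "norm (z j) = 1 / q" for j
    using w q_gt_1 by (simp add: z_def norm_divide norm_power)
  have lim_H: "((\<lambda>t. H (of_real t * z j)) \<longlongrightarrow> H (z j)) (at_left 1)" for j
    unfolding H_def by (rule tendsto_radially_at_left_1, rule continuous_eval_fps[OF conv]) (simp add: norm_z)
  define D where "D = eval_fps (fps_deriv (H_fps deg q)) (z 1)"
  have "(H has_field_derivative D) (at (z 1))"
    unfolding H_def D_def by (rule has_field_derivative_eval_fps, rule conv) (simp add: norm_z)
  then have lim_Q: "(Q \<longlongrightarrow> D * z 1) (at_left 1)"
    unfolding Q_def using zero by (intro tendsto_zero_quotient_at_left_1) (simp_all add: H_def z_def)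
  have bound: "norm (1 - of_real t * w) ^ 4 * norm (1 - of_real t * w ^ 2)
      \<le> (1 - t) * norm (H (of_real t * z 0)) ^ 3 * norm (Q t) ^ 4 * norm (H (of_real t * z 2))"
    if t: "0 < t" "t < 1" for t
  proof -
    have "of_real t * z 0 = of_real (t / q)" "of_real t * z 1 = of_real (t / q) * w"
      "of_real t * z 2 = of_real (t / q) * w ^ 2"
      by (simp_all add: z_def)
    then show ?thesis
      unfolding Q_def H_def using norm_H_fps_341_div[OF t w(1)] by simp
  qed
  have "((\<lambda>t. (1 - t) * norm (H (of_real t * z 0)) ^ 3 * norm (Q t) ^ 4 * norm (H (of_real t * z 2))
              - norm (1 - of_real t * w) ^ 4 * norm (1 - of_real t * w ^ 2))
        \<longlongrightarrow> (1 - 1) * norm (H (z 0)) ^ 3 * norm (D * z 1) ^ 4 * norm (H (z 2))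
              - norm (1 - 1 * w) ^ 4 * norm (1 - 1 * w ^ 2)) (at_left 1)"
    by (intro tendsto_intros lim_H lim_Q tendsto_of_real_at_left_1)
  moreover have "norm (1 - 1 * w) ^ 4 * norm (1 - 1 * w ^ 2) > 0"
    using w(2) by (auto simp: power2_eq_1_iff)
  ultimately have "eventually (\<lambda>t. (1 - t) * norm (H (of_real t * z 0)) ^ 3 * norm (Q t) ^ 4 * norm (H (of_real t * z 2))
              - norm (1 - of_real t * w) ^ 4 * norm (1 - of_real t * w ^ 2) < 0) (at_left 1)"
    by (intro order_tendstoD(2)) auto
  moreover have "eventually (\<lambda>t::real. t \<in> {0<..<1}) (at_left 1)"
    by (rule eventually_at_left_real) simp
  ultimately have "eventually (\<lambda>_. False) (at_left (1::real))"
    by eventually_elim (use bound in force)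
  then show False
    by simp
qed

lemma H_fps_nonzero_on_cball:
  assumes minus: "eval_fps (H_fps deg q) (of_real (- 1 / q)) \<noteq> 0" and z: "norm z \<le> 1 / q"
  shows "eval_fps (H_fps deg q) z \<noteq> 0"
proof (cases "norm z < 1 / q")
  case True
  have "ereal (norm z) < fps_conv_radius (mu_fps deg)" "ereal (norm z) < fps_conv_radius (Z_fps deg)"
    using ereal_less_of_less_le[OF True conv_radius_mu_fps] ereal_less_of_less_le[OF True conv_radius_Z_fps] .
  then have "eval_fps (mu_fps deg) z * eval_fps (Z_fps deg) z = 1"
    by (simp add: eval_fps_mult[symmetric] mu_fps_mult_Z_fps)
  moreover have "norm (of_real q * z) < 1"
    using True q_gt_1 by (simp add: norm_mult field_simps)
  then have "1 - of_real q * z \<noteq> 0"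
    by auto
  ultimately show ?thesis
    using eval_H_fps[OF True] by auto
next
  case False
  define w where "w = of_real q * z"
  have w: "norm w = 1" "z = w / of_real q"
    using False z q_gt_1 by (simp_all add: w_def norm_mult field_simps)
  consider "w ^ 2 \<noteq> 1" | "w = 1" | "w = -1"
    by (auto simp: power2_eq_1_iff)
  then show ?thesis
  proof cases
    case 1
    then show ?thesis
      using H_fps_nonzero_on_circle w by simp
  next
    case 2
    then show ?thesis
      using eval_H_fps_one_div_q c_pos w(2) by simp
  next
    case 3
    then show ?thesis
      using minus w(2) by simp
  qed
qed

lemma H_fps_nonzero_on_larger_ball:
  assumes minus: "eval_fps (H_fps deg q) (of_real (- 1 / q)) \<noteq> 0"
  obtains \<rho> where "1 / q < \<rho>" "\<rho> < H_radius" "\<And>z. norm z < \<rho> \<Longrightarrow> eval_fps (H_fps deg q) z \<noteq> 0"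
proof -
  define R where "R = (1 / q + H_radius) / 2"
  have R: "1 / q < R" "R < H_radius"
    using one_div_q_less_H_radius by (simp_all add: R_def)
  have "ereal (norm z) < fps_conv_radius (H_fps deg q)" if "norm z \<le> R" for z
    using that R by (intro ereal_less_of_less_le[OF _ conv_radius_H_fps]) simp
  then have "continuous_on (cball 0 R) (eval_fps (H_fps deg q))"
    by (intro continuous_on_subset[OF continuous_on_eval_fps]) auto
  moreover have "eval_fps (H_fps deg q) z \<noteq> 0" if "norm z \<le> 1 / q" for z
    using H_fps_nonzero_on_cball[OF minus that] .
  ultimately obtain \<rho> where "1 / q < \<rho>" "\<rho> \<le> R" "\<And>z. norm z < \<rho> \<Longrightarrow> eval_fps (H_fps deg q) z \<noteq> 0"
    using nonzero_on_ball_of_nonzero_on_cball[of R "eval_fps (H_fps deg q)" "1 / q"] R(1) by blast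
  with R(2) show ?thesis
    using that by fastforce
qed

lemma conv_radius_mu_fps_gt:
  assumes minus: "eval_fps (H_fps deg q) (of_real (- 1 / q)) \<noteq> 0"
  obtains \<rho> where "1 / q < \<rho>" "ereal \<rho> \<le> fps_conv_radius (mu_fps deg)"
proof -
  obtain \<rho> where \<rho>: "1 / q < \<rho>" "\<rho> < H_radius"
    and nz: "\<And>z. norm z < \<rho> \<Longrightarrow> eval_fps (H_fps deg q) z \<noteq> 0"
    using H_fps_nonzero_on_larger_ball[OF minus] by blast
  have "ereal \<rho> \<le> fps_conv_radius (H_fps deg q)"
    using \<rho>(2) by (intro order_trans[OF _ conv_radius_H_fps]) simp
  moreover have "min (ereal \<rho>) (fps_conv_radius (H_fps deg q)) \<le> fps_conv_radius (inverse (H_fps deg q))"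
    using nz by (intro fps_conv_radius_inverse) simp
  ultimately have "ereal \<rho> \<le> fps_conv_radius (inverse (H_fps deg q))"
    by (simp add: min_absorb1)
  then have "ereal \<rho> \<le> fps_conv_radius (mu_fps deg)"
    unfolding mu_fps_eq_div_H_fps[of q]
    using fps_conv_radius_mult[of "1 - fps_const (of_real q) * fps_X" "inverse (H_fps deg q)"]
    by simp
  with \<rho>(1) show ?thesis
    by (rule that)
qed

lemma Csum_0_bound:
  assumes minus: "eval_fps (H_fps deg q) (of_real (- 1 / q)) \<noteq> 0"
  obtains x B where "1 < x" "x < q" "\<And>k. \<bar>real_of_int (Csum deg k 0)\<bar> \<le> B * x ^ k"
proof -
  obtain \<rho> where \<rho>: "1 / q < \<rho>" "ereal \<rho> \<le> fps_conv_radius (mu_fps deg)"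
    using conv_radius_mu_fps_gt[OF minus] by blast
  have "1 / q < min \<rho> 1"
    using \<rho>(1) q_gt_1 by simp
  then obtain r where r_gt: "1 / q < r" and "r < min \<rho> 1"
    using dense by blast
  then have r_lt: "r < \<rho>" and "r < 1" and r_pos: "0 < r"
    using q_gt_1 by (auto intro: less_trans[of 0 "1 / q"])
  obtain B where B: "\<And>k. norm (fps_nth (mu_fps deg) k) \<le> B / r ^ k"
    using fps_nth_bound_of_conv_radius[OF r_pos ereal_less_of_less_le[OF r_lt \<rho>(2)]] by blast
  show ?thesis
  proof
    show "1 < 1 / r" "1 / r < q"
      using r_gt \<open>r < 1\<close> r_pos q_gt_1 by (auto simp: field_simps)
    show "\<bar>real_of_int (Csum deg k 0)\<bar> \<le> B * (1 / r) ^ k" for k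
      using B[of k] by (simp add: mu_fps_def power_one_over)
  qed
qed

lemma Z_continuation_eq_eval_Z_fps:
  assumes "Z_continuation deg q f r" and z: "norm z < 1 / q"
  shows "f z = eval_fps (Z_fps deg) z"
proof -
  have "(\<lambda>n. of_nat (Gcount deg n) * z ^ n) sums f z"
    using assms unfolding Z_continuation_def by auto
  moreover have "(\<lambda>n. fps_nth (Z_fps deg) n * z ^ n) sums eval_fps (Z_fps deg) z"
    by (rule sums_eval_fps[OF ereal_less_of_less_le[OF z conv_radius_Z_fps]])
  ultimately show ?thesis
    by (simp add: Z_fps_def sums_unique2)
qed

lemma H_fps_nonzero_of_continuation:
  assumes Z: "Z_continuation deg q f r" and f: "f (of_real (- 1 / q)) \<noteq> 0"
  shows "eval_fps (H_fps deg q) (of_real (- 1 / q)) \<noteq> 0"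
proof -
  have r: "1 / q < r" and hol: "f holomorphic_on (ball 0 r - {of_real (1 / q)})"
    using Z unfolding Z_continuation_def by auto
  define U where "U = ball 0 (min r H_radius) - {complex_of_real (1 / q)}"
  have "open U"
    by (simp add: U_def open_delete)
  have "connected U"
    unfolding U_def by (rule connected_open_delete) auto
  have hol_f: "(\<lambda>z. (1 - of_real q * z) * f z) holomorphic_on U"
    by (intro holomorphic_intros holomorphic_on_subset[OF hol]) (auto simp: U_def)
  have "U \<subseteq> eball 0 (fps_conv_radius (H_fps deg q))"
  proof
    fix z
    assume "z \<in> U"
    then have "norm z < H_radius"
      by (simp add: U_def)
    then show "z \<in> eball 0 (fps_conv_radius (H_fps deg q))"
      using ereal_less_of_less_le[OF _ conv_radius_H_fps] by simp
  qed
  then have hol_H: "eval_fps (H_fps deg q) holomorphic_on U"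
    by (rule holomorphic_on_eval_fps)
  have ball_U: "ball 0 (1 / q) \<subseteq> U"
    using r one_div_q_less_H_radius q_gt_1 by (auto simp: U_def norm_divide)
  have eq: "(1 - of_real q * z) * f z = eval_fps (H_fps deg q) z" if "z \<in> ball 0 (1 / q)" for z
    using that Z_continuation_eq_eval_Z_fps[OF Z] eval_H_fps by simp
  have minus_U: "of_real (- 1 / q) \<in> U"
    using r one_div_q_less_H_radius q_gt_1 by (auto simp: U_def norm_divide)
  have "(1 - of_real q * of_real (- 1 / q)) * f (of_real (- 1 / q)) = eval_fps (H_fps deg q) (of_real (- 1 / q))"
    by (rule analytic_continuation_open[OF _ \<open>open U\<close> _ \<open>connected U\<close> ball_U hol_f hol_H eq minus_U])
      (use q_gt_1 in auto)
  moreover have "1 - of_real q * complex_of_real (- 1 / q) = 2"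
    using q_gt_1 by simp
  ultimately show ?thesis
    using f by auto
qed

end

theorem lemma2p5:
  fixes deg :: "'p \<Rightarrow> nat" and c q :: real
  assumes "arith_semigroup deg"
    and "0 < c" and "1 < q"
    and "axiom_A_sharp deg c q"
    and "\<exists>f r. Z_continuation deg q f r \<and> f (complex_of_real (- 1 / q)) \<noteq> 0"
  shows "\<exists>\<eta> K. 0 \<le> \<eta> \<and> \<eta> < 1 \<and>
           (\<forall>n m. 1 \<le> n \<longrightarrow> 1 \<le> m \<longrightarrow>
              \<bar>real_of_int (Csum deg n m)\<bar> \<le> K * q powr (\<eta> * real n) * exp (q ^ m) \<and>
              \<bar>real_of_int (Msum deg n m)\<bar> \<le> K * q powr (\<eta> * real n) * exp (q ^ m))"
proof -
  obtain \<eta>0 K where "0 \<le> \<eta>0" "\<eta>0 < 1" "\<And>n. \<bar>real (Gcount deg n) - c * q ^ n\<bar> \<le> K * q powr (\<eta>0 * real n)"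
    using assms(4) unfolding axiom_A_sharp_def by blast
  with assms(1-3) interpret axiom_A_sharp_semigroup deg c q \<eta>0 K
    by unfold_locales auto
  obtain f r where "Z_continuation deg q f r" "f (of_real (- 1 / q)) \<noteq> 0"
    using assms(5) by auto
  then have "eval_fps (H_fps deg q) (of_real (- 1 / q)) \<noteq> 0"
    by (rule H_fps_nonzero_of_continuation)
  then obtain x B where x: "1 < x" "x < q" and B: "\<And>k. \<bar>real_of_int (Csum deg k 0)\<bar> \<le> B * x ^ k"
    using Csum_0_bound by blast
  obtain K' where "\<And>n m. \<bar>real_of_int (Csum deg n m)\<bar> \<le> K' * x ^ n * exp (q ^ m)"
    and "\<And>n m. \<bar>real_of_int (Msum deg n m)\<bar> \<le> K' * x ^ n * exp (q ^ m)"
    using Csum_Msum_bound_of_Csum_0_bound[OF Gcount_le x B] by blast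
  moreover have "0 \<le> ln x / ln q" "ln x / ln q < 1"
    using x by (simp_all add: divide_nonneg_nonneg field_simps)
  ultimately show ?thesis
    using powr_ln_ratio[OF assms(3)] x(1) by (intro exI[of _ "ln x / ln q"] exI[of _ K']) simp
qed

end
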